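(* Let $H$ be a distribution function on $\mathbb{R}$ with finite variance, let $n\ge1$, and let $x_{ki}$, $k=1,2,\ldots$, $i=1,\ldots,n$, be i.i.d. random variables with distribution $H$. For each $k$ put $\bar x_k=\frac1n\sum_{i=1}^n x_{ki}$ and $R_k=(x_{k1}-\bar x_k,\ldots,x_{kn}-\bar x_k)\in\mathbb{R}^n$. Then for any $N>1$, $$(N-1)\,\mathrm{var}\{E(\bar x_1\mid R_1+\cdots+R_{N-1})\}\ \ge\ N\,\mathrm{var}\{E(\bar x_1\mid R_1+\cdots+R_N)\},$$ where sums of the vectors $R_k$ are componentwise. *)

theory Defs
  imports "HOL-Probability.Probability"
begin

definition row_mean :: "(nat \<Rightarrow> 'n::finite \<Rightarrow> 'a \<Rightarrow> real) \<Rightarrow> nat \<Rightarrow> 'a \<Rightarrow> real" where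
  "row_mean X k \<omega> = (\<Sum>i\<in>UNIV. X k i \<omega>) / real CARD('n)"

definition resid :: "(nat \<Rightarrow> 'n::finite \<Rightarrow> 'a \<Rightarrow> real) \<Rightarrow> nat \<Rightarrow> 'a \<Rightarrow> real ^ 'n" where
  "resid X k \<omega> = (\<chi> i. X k i \<omega> - row_mean X k \<omega>)"

text \<open>Componentwise sum R_1 + ... + R_N (rows indexed 0..N-1).\<close>
definition resid_sum :: "(nat \<Rightarrow> 'n::finite \<Rightarrow> 'a \<Rightarrow> real) \<Rightarrow> nat \<Rightarrow> 'a \<Rightarrow> real ^ 'n" where
  "resid_sum X N \<omega> = (\<Sum>k<N. resid X k \<omega>)"

definition resid_sigma :: "'a measure \<Rightarrow> (nat \<Rightarrow> 'n::finite \<Rightarrow> 'a \<Rightarrow> real) \<Rightarrow> nat \<Rightarrow> 'a measure" where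
  "resid_sigma M X N = vimage_algebra (space M) (resid_sum X N) (borel :: (real ^ 'n) measure)"

end

theory Submission
  imports Defs
begin

text \<open>Write \<open>S\<^sub>N = R\<^sub>1 + \<dots> + R\<^sub>N\<close> and \<open>V\<^sub>N = E(xbar\<^sub>1 | S\<^sub>N) = \<phi>(S\<^sub>N)\<close> (Doob--Dynkin).
  Let \<open>Y = (A\<phi>)(S\<^sub>N\<^sub>-\<^sub>1)\<close>, where \<open>A\<phi>(u) = E \<phi>(u + R)\<close> averages over one more residual.
  As \<open>Y\<close> is a function of \<open>S\<^sub>N\<^sub>-\<^sub>1\<close> and \<open>(xbar\<^sub>1, S\<^sub>N\<^sub>-\<^sub>1)\<close> is independent of \<open>R\<^sub>N\<close>,
  \<open>E(Y V\<^sub>N\<^sub>-\<^sub>1) = E(Y xbar\<^sub>1) = E(xbar\<^sub>1 \<phi>(S\<^sub>N)) = E(V\<^sub>N\<^sup>2)\<close>, so \<open>cov(Y, V\<^sub>N\<^sub>-\<^sub>1) = var V\<^sub>N\<close>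
  and Cauchy--Schwarz gives \<open>(var V\<^sub>N)\<^sup>2 \<le> var Y \<cdot> var V\<^sub>N\<^sub>-\<^sub>1\<close>. The residuals being i.i.d.,
  \<open>S\<^sub>N\<close> is a random walk, and the Efron--Stein inequality for the symmetric function
  \<open>\<phi>(S\<^sub>N)\<close> of its \<open>N\<close> increments yields \<open>N var Y \<le> (N - 1) var V\<^sub>N\<close>.\<close>

section \<open>Square-integrable random variables\<close>

lemma integrable_mult_of_square_integrable:
  fixes f g :: "'a \<Rightarrow> real"
  assumes [measurable]: "f \<in> borel_measurable M" "g \<in> borel_measurable M"
    and "integrable M (\<lambda>x. (f x)\<^sup>2)" "integrable M (\<lambda>x. (g x)\<^sup>2)"
  shows "integrable M (\<lambda>x. f x * g x)"
proof (rule Bochner_Integration.integrable_bound[of _ "\<lambda>x. (f x)\<^sup>2 + (g x)\<^sup>2"])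
  show "integrable M (\<lambda>x. (f x)\<^sup>2 + (g x)\<^sup>2)" using assms by auto
  have "\<bar>a * b\<bar> \<le> a\<^sup>2 + b\<^sup>2" for a b :: real
    using sum_squares_bound[of "\<bar>a\<bar>" "\<bar>b\<bar>"] mult_nonneg_nonneg[OF abs_ge_zero abs_ge_zero, of a b]
    unfolding abs_mult power2_abs by linarith
  then show "AE x in M. norm (f x * g x) \<le> norm ((f x)\<^sup>2 + (g x)\<^sup>2)"
    by (simp del: abs_mult)
qed simp

lemma quadratic_nonneg_imp_discriminant_le:
  fixes a b c :: real
  assumes nonneg: "\<And>t. 0 \<le> a - 2 * t * b + t\<^sup>2 * c" and "0 \<le> c"
  shows "b\<^sup>2 \<le> a * c"
proof (cases "c = 0")
  case True
  have "b = 0"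
  proof (rule ccontr)
    assume "b \<noteq> 0"
    with True nonneg[of "(a + 1) / (2 * b)"] show False by (simp add: field_simps)
  qed
  with True show ?thesis using nonneg[of 0] by simp
next
  case False
  with \<open>0 \<le> c\<close> have "0 < c" by simp
  have "0 \<le> a - 2 * (b / c) * b + (b / c)\<^sup>2 * c" by (rule nonneg)
  also have "\<dots> = a - b\<^sup>2 / c" using \<open>0 < c\<close> by (simp add: power2_eq_square field_simps)
  finally show ?thesis using \<open>0 < c\<close> by (simp add: field_simps)
qed

lemma Cauchy_Schwarz_integral:
  fixes f g :: "'a \<Rightarrow> real"
  assumes [measurable]: "f \<in> borel_measurable M" "g \<in> borel_measurable M"
    and f2: "integrable M (\<lambda>x. (f x)\<^sup>2)" and g2: "integrable M (\<lambda>x. (g x)\<^sup>2)"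
  shows "(\<integral>x. f x * g x \<partial>M)\<^sup>2 \<le> (\<integral>x. (f x)\<^sup>2 \<partial>M) * (\<integral>x. (g x)\<^sup>2 \<partial>M)"
proof (rule quadratic_nonneg_imp_discriminant_le)
  fix t :: real
  have fg: "integrable M (\<lambda>x. f x * g x)"
    by (rule integrable_mult_of_square_integrable) (use f2 g2 in auto)
  have "\<And>x. (f x - t * g x)\<^sup>2 = (f x)\<^sup>2 - 2 * t * (f x * g x) + t\<^sup>2 * (g x)\<^sup>2"
    by (simp add: power2_eq_square algebra_simps)
  then have "(\<integral>x. (f x - t * g x)\<^sup>2 \<partial>M)
      = (\<integral>x. (f x)\<^sup>2 \<partial>M) - 2 * t * (\<integral>x. f x * g x \<partial>M) + t\<^sup>2 * (\<integral>x. (g x)\<^sup>2 \<partial>M)"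
    using f2 g2 fg by simp
  moreover have "0 \<le> (\<integral>x. (f x - t * g x)\<^sup>2 \<partial>M)" by simp
  ultimately show "0 \<le> (\<integral>x. (f x)\<^sup>2 \<partial>M) - 2 * t * (\<integral>x. f x * g x \<partial>M) + t\<^sup>2 * (\<integral>x. (g x)\<^sup>2 \<partial>M)"
    by simp
qed simp

lemma mult_le_mult_of_square_le_mult:
  fixes a b c r s :: real
  assumes "a\<^sup>2 \<le> b * c" and "r * b \<le> s * a"
    and "0 \<le> a" "0 \<le> c" "0 \<le> r" "0 \<le> s"
  shows "r * a \<le> s * c"
proof (cases "a = 0")
  case False
  with \<open>0 \<le> a\<close> have "0 < a" by simp
  have "r * a * a \<le> r * (b * c)"
    using mult_left_mono[OF assms(1) \<open>0 \<le> r\<close>] by (simp add: power2_eq_square mult.assoc)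
  also have "\<dots> = (r * b) * c" by simp
  also have "\<dots> \<le> (s * a) * c" by (rule mult_right_mono[OF assms(2) \<open>0 \<le> c\<close>])
  finally show ?thesis using \<open>0 < a\<close> by (simp add: mult.commute mult.left_commute)
qed (use assms in simp)

context prob_space
begin

lemma square_integral_le_integral_square:
  fixes g :: "'a \<Rightarrow> real"
  assumes [measurable]: "g \<in> borel_measurable M" and "integrable M (\<lambda>x. (g x)\<^sup>2)"
  shows "(\<integral>x. g x \<partial>M)\<^sup>2 \<le> (\<integral>x. (g x)\<^sup>2 \<partial>M)"
  using variance_positive[of g] variance_eq[OF square_integrable_imp_integrable assms(2)] assms
  by simp

lemma square_integral_le_nn_integral_square:
  fixes g :: "'a \<Rightarrow> real"
  assumes [measurable]: "g \<in> borel_measurable M"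
  shows "ennreal ((\<integral>x. g x \<partial>M)\<^sup>2) \<le> (\<integral>\<^sup>+x. ennreal ((g x)\<^sup>2) \<partial>M)"
proof (cases "integrable M (\<lambda>x. (g x)\<^sup>2)")
  case True
  then have "(\<integral>\<^sup>+x. ennreal ((g x)\<^sup>2) \<partial>M) = ennreal (\<integral>x. (g x)\<^sup>2 \<partial>M)"
    by (intro nn_integral_eq_integral) auto
  with square_integral_le_integral_square[OF assms True] show ?thesis by simp
next
  case False
  then have "(\<integral>\<^sup>+x. ennreal ((g x)\<^sup>2) \<partial>M) = \<infinity>"
    unfolding integrable_iff_bounded by (auto simp: less_top[symmetric])
  then show ?thesis by simp
qed

lemma
  fixes g :: "'a \<Rightarrow> real"
  assumes [measurable]: "g \<in> borel_measurable M" and g2: "integrable M (\<lambda>x. (g x)\<^sup>2)"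
  shows integrable_square_diff: "integrable M (\<lambda>x. (g x - c)\<^sup>2)"
    and integral_square_diff:
      "(\<integral>x. (g x - c)\<^sup>2 \<partial>M) = (\<integral>x. (g x)\<^sup>2 \<partial>M) - 2 * c * expectation g + c\<^sup>2"
proof -
  have g: "integrable M g" by (rule square_integrable_imp_integrable[OF _ g2]) simp
  have eq: "\<And>x. (g x - c)\<^sup>2 = (g x)\<^sup>2 - 2 * c * g x + c\<^sup>2"
    by (simp add: power2_eq_square algebra_simps)
  show "integrable M (\<lambda>x. (g x - c)\<^sup>2)" unfolding eq using g g2 by auto
  show "(\<integral>x. (g x - c)\<^sup>2 \<partial>M) = (\<integral>x. (g x)\<^sup>2 \<partial>M) - 2 * c * expectation g + c\<^sup>2"
    unfolding eq using g g2 by (simp add: prob_space)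
qed

lemma nn_integral_square_diff_eq:
  fixes g :: "'a \<Rightarrow> real"
  assumes [measurable]: "g \<in> borel_measurable M" and g2: "integrable M (\<lambda>x. (g x)\<^sup>2)"
  shows "(\<integral>\<^sup>+x. ennreal ((g x - c)\<^sup>2) \<partial>M)
    = ennreal ((expectation g - c)\<^sup>2) + (\<integral>\<^sup>+x. ennreal ((g x - expectation g)\<^sup>2) \<partial>M)"
proof -
  have "(\<integral>\<^sup>+x. ennreal ((g x - d)\<^sup>2) \<partial>M) = ennreal (\<integral>x. (g x - d)\<^sup>2 \<partial>M)" for d
    by (intro nn_integral_eq_integral integrable_square_diff[OF _ g2]) auto
  moreover have "(\<integral>x. (g x - c)\<^sup>2 \<partial>M) = (expectation g - c)\<^sup>2 + variance g"
    by (simp only: integral_square_diff[OF assms(1) g2]) (simp add: power2_eq_square algebra_simps)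
  ultimately show ?thesis by (simp add: ennreal_plus)
qed

lemma integral_mult_centred:
  fixes f g :: "'a \<Rightarrow> real"
  assumes "integrable M f" "integrable M g" "integrable M (\<lambda>x. f x * g x)"
  shows "(\<integral>x. (f x - expectation f) * (g x - expectation g) \<partial>M)
    = (\<integral>x. f x * g x \<partial>M) - expectation f * expectation g"
proof -
  have "\<And>x. (f x - expectation f) * (g x - expectation g)
      = f x * g x - expectation g * f x - expectation f * g x + expectation f * expectation g"
    by (simp add: algebra_simps)
  then show ?thesis using assms by (simp add: prob_space)
qed

lemma variance_distr:
  fixes f :: "'b \<Rightarrow> real"
  assumes [measurable]: "S \<in> measurable M N" "f \<in> borel_measurable N"
  shows "prob_space.variance (distr M N S) f = variance (\<lambda>\<omega>. f (S \<omega>))"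
  by (simp add: integral_distr)

end

section \<open>Convolution powers and an Efron--Stein inequality\<close>

primrec conv_power :: "'v::ordered_euclidean_space measure \<Rightarrow> nat \<Rightarrow> 'v measure" where
  "conv_power Q 0 = return borel 0"
| "conv_power Q (Suc k) = (conv_power Q k \<star> Q)"

declare conv_power.simps(2) [simp del]

lemma sets_conv_power [measurable_cong, simp]: "sets (conv_power Q k) = sets borel"
  by (cases k) (auto simp: conv_power.simps)

lemma conv_power_Suc_distr:
  "conv_power Q (Suc k) = distr (conv_power Q k \<Otimes>\<^sub>M Q) borel (\<lambda>z. fst z + snd z)"
  by (simp add: conv_power.simps convolution_def case_prod_beta')

text \<open>For a random walk \<open>S\<close> with increments of law \<open>Q\<close>, so that \<open>S\<^sub>k\<close> has law
  \<open>conv_power Q k\<close>, \<open>shift_mean Q \<phi> (S\<^sub>k) = E(\<phi>(S\<^sub>k\<^sub>+\<^sub>1) | S\<^sub>k)\<close>, and \<open>step_variance Q k \<phi>\<close>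
  is the expected conditional variance of \<open>\<phi>(S\<^sub>k\<^sub>+\<^sub>1)\<close> given \<open>S\<^sub>k\<close>. Variances are taken in
  \<open>ennreal\<close> so that they can be manipulated before square integrability is known.\<close>

definition shift_mean :: "'v::real_vector measure \<Rightarrow> ('v \<Rightarrow> real) \<Rightarrow> 'v \<Rightarrow> real" where
  "shift_mean Q \<phi> u = (\<integral>a. \<phi> (u + a) \<partial>Q)"

definition nn_variance :: "'a measure \<Rightarrow> ('a \<Rightarrow> real) \<Rightarrow> ennreal" where
  "nn_variance L \<phi> = (\<integral>\<^sup>+x. ennreal ((\<phi> x - (\<integral>y. \<phi> y \<partial>L))\<^sup>2) \<partial>L)"

definition step_variance :: "'v::ordered_euclidean_space measure \<Rightarrow> nat \<Rightarrow> ('v \<Rightarrow> real) \<Rightarrow> ennreal" where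
  "step_variance Q k \<phi> =
     (\<integral>\<^sup>+u. (\<integral>\<^sup>+a. ennreal ((\<phi> (u + a) - shift_mean Q \<phi> u)\<^sup>2) \<partial>Q) \<partial>conv_power Q k)"

context
  fixes Q :: "'v::ordered_euclidean_space measure"
  assumes prob_Q: "prob_space Q" and sets_Q [measurable_cong]: "sets Q = sets borel"
begin

interpretation Q: prob_space Q by (rule prob_Q)

lemma prob_space_conv_power: "prob_space (conv_power Q k)"
proof (induction k)
  case 0
  then show ?case by (simp add: prob_space_return)
next
  case (Suc k)
  interpret L: prob_space "conv_power Q k" by (rule Suc)
  interpret P: pair_prob_space "conv_power Q k" Q ..
  show ?case unfolding conv_power_Suc_distr by (rule P.P.prob_space_distr) measurable
qed

lemma pair_prob_space_conv_power: "pair_prob_space (conv_power Q k) Q"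
proof -
  interpret L: prob_space "conv_power Q k" by (rule prob_space_conv_power)
  show ?thesis ..
qed

lemma borel_measurable_shift_mean [measurable]:
  assumes [measurable]: "\<phi> \<in> borel_measurable borel"
  shows "shift_mean Q \<phi> \<in> borel_measurable borel"
  unfolding shift_mean_def by measurable

lemma integrable_conv_power_Suc_iff:
  fixes f :: "'v \<Rightarrow> real"
  assumes [measurable]: "f \<in> borel_measurable borel"
  shows "integrable (conv_power Q (Suc k)) f
    \<longleftrightarrow> integrable (conv_power Q k \<Otimes>\<^sub>M Q) (\<lambda>z. f (fst z + snd z))"
  unfolding conv_power_Suc_distr by (rule integrable_distr_eq) measurable

lemma integrable_conv_power_of_square:
  fixes f :: "'v \<Rightarrow> real"
  assumes [measurable]: "f \<in> borel_measurable borel"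
    and "integrable (conv_power Q k) (\<lambda>x. (f x)\<^sup>2)"
  shows "integrable (conv_power Q k) f"
proof -
  interpret L: prob_space "conv_power Q k" by (rule prob_space_conv_power)
  show ?thesis by (rule L.square_integrable_imp_integrable) (use assms in auto)
qed

lemma AE_integrable_shift:
  fixes f :: "'v \<Rightarrow> real"
  assumes [measurable]: "f \<in> borel_measurable borel"
    and "integrable (conv_power Q (Suc k)) f"
  shows "AE u in conv_power Q k. integrable Q (\<lambda>a. f (u + a))"
proof -
  interpret P: pair_prob_space "conv_power Q k" Q by (rule pair_prob_space_conv_power)
  show ?thesis
    using P.AE_integrable_fst'[of "\<lambda>z. f (fst z + snd z)"] assms integrable_conv_power_Suc_iff
    by simp
qed

lemma integral_shift_mean:
  assumes [measurable]: "\<phi> \<in> borel_measurable borel"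
    and "integrable (conv_power Q (Suc k)) \<phi>"
  shows "(\<integral>u. shift_mean Q \<phi> u \<partial>conv_power Q k) = (\<integral>x. \<phi> x \<partial>conv_power Q (Suc k))"
proof -
  interpret P: pair_prob_space "conv_power Q k" Q by (rule pair_prob_space_conv_power)
  show ?thesis
    using P.integral_fst'[of "\<lambda>z. \<phi> (fst z + snd z)"] assms integrable_conv_power_Suc_iff
    by (simp add: shift_mean_def conv_power_Suc_distr integral_distr)
qed

lemma integrable_square_shift_mean:
  assumes [measurable]: "\<phi> \<in> borel_measurable borel"
    and \<phi>2: "integrable (conv_power Q (Suc k)) (\<lambda>x. (\<phi> x)\<^sup>2)"
  shows "integrable (conv_power Q k) (\<lambda>u. (shift_mean Q \<phi> u)\<^sup>2)"
proof -
  interpret P: pair_prob_space "conv_power Q k" Q by (rule pair_prob_space_conv_power)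
  have "integrable (conv_power Q k \<Otimes>\<^sub>M Q) (\<lambda>z. (\<phi> (fst z + snd z))\<^sup>2)"
    using \<phi>2 integrable_conv_power_Suc_iff[of "\<lambda>x. (\<phi> x)\<^sup>2"] by simp
  note bound = P.integrable_fst'[OF this]
  have square_shift: "AE u in conv_power Q k. integrable Q (\<lambda>a. (\<phi> (u + a))\<^sup>2)"
    by (rule AE_integrable_shift[OF _ \<phi>2]) measurable
  from bound show ?thesis
  proof (rule Bochner_Integration.integrable_bound)
    show "AE u in conv_power Q k.
        norm ((shift_mean Q \<phi> u)\<^sup>2) \<le> norm (\<integral>a. (\<phi> (fst (u, a) + snd (u, a)))\<^sup>2 \<partial>Q)"
      using square_shift
    proof eventually_elim
      case (elim u)
      have "(shift_mean Q \<phi> u)\<^sup>2 \<le> (\<integral>a. (\<phi> (u + a))\<^sup>2 \<partial>Q)"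
        unfolding shift_mean_def by (rule Q.square_integral_le_integral_square) (use elim in auto)
      then show ?case by simp
    qed
  qed simp
qed

text \<open>The law of total variance for the last step of the random walk.\<close>

lemma nn_variance_conv_power_Suc:
  assumes [measurable]: "\<phi> \<in> borel_measurable borel"
    and \<phi>2: "integrable (conv_power Q (Suc k)) (\<lambda>x. (\<phi> x)\<^sup>2)"
  shows "nn_variance (conv_power Q (Suc k)) \<phi>
    = nn_variance (conv_power Q k) (shift_mean Q \<phi>) + step_variance Q k \<phi>"
proof -
  let ?L = "conv_power Q k" and ?c = "\<integral>x. \<phi> x \<partial>conv_power Q (Suc k)"
  interpret P: pair_prob_space ?L Q by (rule pair_prob_space_conv_power)
  have mean: "(\<integral>u. shift_mean Q \<phi> u \<partial>?L) = ?c"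
    by (rule integral_shift_mean) (auto intro: integrable_conv_power_of_square \<phi>2)
  have "nn_variance (conv_power Q (Suc k)) \<phi>
      = (\<integral>\<^sup>+z. ennreal ((\<phi> (fst z + snd z) - ?c)\<^sup>2) \<partial>(?L \<Otimes>\<^sub>M Q))"
    unfolding nn_variance_def conv_power_Suc_distr by (subst nn_integral_distr) auto
  also have "\<dots> = (\<integral>\<^sup>+u. (\<integral>\<^sup>+a. ennreal ((\<phi> (u + a) - ?c)\<^sup>2) \<partial>Q) \<partial>?L)"
    by (subst Q.nn_integral_fst[symmetric]) auto
  also have "\<dots> = (\<integral>\<^sup>+u. ennreal ((shift_mean Q \<phi> u - ?c)\<^sup>2)
      + (\<integral>\<^sup>+a. ennreal ((\<phi> (u + a) - shift_mean Q \<phi> u)\<^sup>2) \<partial>Q) \<partial>?L)"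
  proof (rule nn_integral_cong_AE)
    have "AE u in ?L. integrable Q (\<lambda>a. (\<phi> (u + a))\<^sup>2)"
      by (rule AE_integrable_shift[OF _ \<phi>2]) measurable
    then show "AE u in ?L. (\<integral>\<^sup>+a. ennreal ((\<phi> (u + a) - ?c)\<^sup>2) \<partial>Q)
        = ennreal ((shift_mean Q \<phi> u - ?c)\<^sup>2)
          + (\<integral>\<^sup>+a. ennreal ((\<phi> (u + a) - shift_mean Q \<phi> u)\<^sup>2) \<partial>Q)"
      unfolding shift_mean_def
      by eventually_elim (rule Q.nn_integral_square_diff_eq, measurable)
  qed
  also have "\<dots> = (\<integral>\<^sup>+u. ennreal ((shift_mean Q \<phi> u - ?c)\<^sup>2) \<partial>?L) + step_variance Q k \<phi>"
    unfolding step_variance_def by (rule nn_integral_add) auto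
  finally show ?thesis
    unfolding nn_variance_def mean .
qed

lemma square_shift_mean_diff_le:
  assumes [measurable]: "\<phi> \<in> borel_measurable borel"
    and "integrable Q (\<lambda>b. \<phi> (t + a + b))" "integrable Q (\<lambda>b. shift_mean Q \<phi> (t + b))"
  shows "ennreal ((shift_mean Q \<phi> (t + a) - shift_mean Q (shift_mean Q \<phi>) t)\<^sup>2)
    \<le> (\<integral>\<^sup>+b. ennreal ((\<phi> (t + b + a) - shift_mean Q \<phi> (t + b))\<^sup>2) \<partial>Q)"
proof -
  have "shift_mean Q \<phi> (t + a) - shift_mean Q (shift_mean Q \<phi>) t
      = (\<integral>b. \<phi> (t + a + b) - shift_mean Q \<phi> (t + b) \<partial>Q)"
    using assms by (simp add: shift_mean_def add.assoc)
  then have "ennreal ((shift_mean Q \<phi> (t + a) - shift_mean Q (shift_mean Q \<phi>) t)\<^sup>2)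
      \<le> (\<integral>\<^sup>+b. ennreal ((\<phi> (t + a + b) - shift_mean Q \<phi> (t + b))\<^sup>2) \<partial>Q)"
    by (simp only:) (rule Q.square_integral_le_nn_integral_square, measurable)
  then show ?thesis by (simp add: ac_simps)
qed

lemma step_variance_shift_mean_le:
  assumes [measurable]: "\<phi> \<in> borel_measurable borel"
    and \<phi>2: "integrable (conv_power Q (Suc (Suc k))) (\<lambda>x. (\<phi> x)\<^sup>2)"
  shows "step_variance Q k (shift_mean Q \<phi>) \<le> step_variance Q (Suc k) \<phi>"
proof -
  let ?L = "conv_power Q k" and ?A = "shift_mean Q"
  interpret P: pair_prob_space ?L Q by (rule pair_prob_space_conv_power)
  interpret QQ: pair_prob_space Q Q ..
  have \<phi>: "integrable (conv_power Q (Suc (Suc k))) \<phi>"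
    by (rule integrable_conv_power_of_square[OF _ \<phi>2]) simp
  have A\<phi>: "integrable (conv_power Q (Suc k)) (?A \<phi>)"
    by (rule integrable_conv_power_of_square[OF _ integrable_square_shift_mean[OF _ \<phi>2]]) simp_all
  have "AE v in conv_power Q (Suc k). integrable Q (\<lambda>b. \<phi> (v + b))"
    by (rule AE_integrable_shift[OF _ \<phi>]) simp
  then have int_\<phi>: "AE z in ?L \<Otimes>\<^sub>M Q. integrable Q (\<lambda>b. \<phi> (fst z + snd z + b))"
    unfolding conv_power_Suc_distr by (rule AE_distrD[rotated]) measurable
  have "AE t in ?L. integrable Q (\<lambda>b. ?A \<phi> (t + b))"
    by (rule AE_integrable_shift[OF _ A\<phi>]) simp
  then have "AE t in distr (?L \<Otimes>\<^sub>M Q) ?L fst. integrable Q (\<lambda>b. ?A \<phi> (t + b))"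
    by (simp only: Q.distr_pair_fst)
  then have int_A\<phi>: "AE z in ?L \<Otimes>\<^sub>M Q. integrable Q (\<lambda>b. ?A \<phi> (fst z + b))"
    by (rule AE_distrD[rotated]) measurable
  have "step_variance Q k (?A \<phi>)
      = (\<integral>\<^sup>+z. ennreal ((?A \<phi> (fst z + snd z) - ?A (?A \<phi>) (fst z))\<^sup>2) \<partial>(?L \<Otimes>\<^sub>M Q))"
    unfolding step_variance_def by (subst Q.nn_integral_fst[symmetric]) auto
  also have "\<dots> \<le> (\<integral>\<^sup>+z. (\<integral>\<^sup>+b. ennreal ((\<phi> (fst z + b + snd z) - ?A \<phi> (fst z + b))\<^sup>2) \<partial>Q)
      \<partial>(?L \<Otimes>\<^sub>M Q))"
  proof (rule nn_integral_mono_AE)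
    show "AE z in ?L \<Otimes>\<^sub>M Q. ennreal ((?A \<phi> (fst z + snd z) - ?A (?A \<phi>) (fst z))\<^sup>2)
        \<le> (\<integral>\<^sup>+b. ennreal ((\<phi> (fst z + b + snd z) - ?A \<phi> (fst z + b))\<^sup>2) \<partial>Q)"
      using int_\<phi> int_A\<phi> by eventually_elim (rule square_shift_mean_diff_le, simp_all)
  qed
  also have "\<dots> = (\<integral>\<^sup>+t. (\<integral>\<^sup>+a. (\<integral>\<^sup>+b. ennreal ((\<phi> (t + b + a) - ?A \<phi> (t + b))\<^sup>2) \<partial>Q) \<partial>Q) \<partial>?L)"
    by (subst Q.nn_integral_fst[symmetric]) auto
  also have "\<dots> = (\<integral>\<^sup>+t. (\<integral>\<^sup>+b. (\<integral>\<^sup>+a. ennreal ((\<phi> (t + b + a) - ?A \<phi> (t + b))\<^sup>2) \<partial>Q) \<partial>Q) \<partial>?L)"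
    by (intro nn_integral_cong QQ.Fubini') measurable
  also have "\<dots> = (\<integral>\<^sup>+z. (\<integral>\<^sup>+a. ennreal ((\<phi> (fst z + snd z + a) - ?A \<phi> (fst z + snd z))\<^sup>2) \<partial>Q)
      \<partial>(?L \<Otimes>\<^sub>M Q))"
    by (subst Q.nn_integral_fst[symmetric]) auto
  also have "\<dots> = step_variance Q (Suc k) \<phi>"
    unfolding step_variance_def conv_power_Suc_distr by (subst nn_integral_distr) auto
  finally show ?thesis .
qed

lemma nn_variance_le_step_variance:
  assumes "\<phi> \<in> borel_measurable borel"
    and "integrable (conv_power Q (Suc k)) (\<lambda>x. (\<phi> x)\<^sup>2)"
  shows "nn_variance (conv_power Q (Suc k)) \<phi> \<le> of_nat (Suc k) * step_variance Q k \<phi>"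
  using assms
proof (induction k arbitrary: \<phi>)
  case 0
  note [measurable] = 0(1)
  have "nn_variance (conv_power Q 0) (shift_mean Q \<phi>) = 0"
    by (simp add: nn_variance_def nn_integral_return integral_return)
  with nn_variance_conv_power_Suc[OF 0] show ?case by simp
next
  case (Suc k)
  note [measurable] = Suc.prems(1)
  have "nn_variance (conv_power Q (Suc (Suc k))) \<phi>
      = nn_variance (conv_power Q (Suc k)) (shift_mean Q \<phi>) + step_variance Q (Suc k) \<phi>"
    by (rule nn_variance_conv_power_Suc[OF Suc.prems])
  also have "\<dots> \<le> of_nat (Suc k) * step_variance Q k (shift_mean Q \<phi>) + step_variance Q (Suc k) \<phi>"
    by (intro add_mono Suc.IH integrable_square_shift_mean Suc.prems order_refl) simp
  also have "\<dots> \<le> of_nat (Suc k) * step_variance Q (Suc k) \<phi> + step_variance Q (Suc k) \<phi>"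
    by (intro add_mono mult_left_mono step_variance_shift_mean_le Suc.prems order_refl) simp
  finally show ?case by (simp add: distrib_right add_ac)
qed

text \<open>The Efron--Stein inequality for the symmetric function \<open>\<phi> (a\<^sub>0 + \<dots> + a\<^sub>k)\<close>
  of \<open>k + 1\<close> i.i.d. increments.\<close>

lemma variance_shift_mean_le:
  assumes [measurable]: "\<phi> \<in> borel_measurable borel"
    and \<phi>2: "integrable (conv_power Q (Suc k)) (\<lambda>x. (\<phi> x)\<^sup>2)"
  shows "real (Suc k) * prob_space.variance (conv_power Q k) (shift_mean Q \<phi>)
    \<le> real k * prob_space.variance (conv_power Q (Suc k)) \<phi>"
proof -
  interpret L: prob_space "conv_power Q k" by (rule prob_space_conv_power)
  interpret L1: prob_space "conv_power Q (Suc k)" by (rule prob_space_conv_power)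
  let ?a = "L.variance (shift_mean Q \<phi>)" and ?b = "L1.variance \<phi>"
  have nn_variance_eq: "nn_variance L f = ennreal (prob_space.variance L f)"
    if "prob_space L" "f \<in> borel_measurable L" "integrable L (\<lambda>x. (f x)\<^sup>2)" for L and f :: "'v \<Rightarrow> real"
    unfolding nn_variance_def
    by (intro nn_integral_eq_integral prob_space.integrable_square_diff that) simp
  have va: "nn_variance (conv_power Q k) (shift_mean Q \<phi>) = ennreal ?a"
    by (intro nn_variance_eq integrable_square_shift_mean \<phi>2 L.prob_space_axioms) simp_all
  have vb: "nn_variance (conv_power Q (Suc k)) \<phi> = ennreal ?b"
    by (intro nn_variance_eq \<phi>2 L1.prob_space_axioms) simp
  have sum: "ennreal ?b = ennreal ?a + step_variance Q k \<phi>"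
    using nn_variance_conv_power_Suc[OF _ \<phi>2] va vb by simp
  then obtain d where d: "step_variance Q k \<phi> = ennreal d" "0 \<le> d"
    by (cases "step_variance Q k \<phi>" rule: ennreal_cases) auto
  with sum have "?b = ?a + d" by (simp flip: ennreal_plus)
  moreover have "ennreal ?b \<le> ennreal (real (Suc k) * d)"
    using nn_variance_le_step_variance[OF _ \<phi>2] vb d
    by (simp add: ennreal_mult ennreal_of_nat_eq_real_of_nat)
  then have "?b \<le> real (Suc k) * d" using d by (simp add: ennreal_le_iff)
  ultimately show ?thesis by (simp add: algebra_simps)
qed

end

section \<open>The Doob--Dynkin lemma\<close>

lemma Doob_Dynkin_ennreal:
  fixes s :: "'a \<Rightarrow> 'b" and u :: "'a \<Rightarrow> ennreal"
  assumes s: "s \<in> \<Omega> \<rightarrow> space N" and "u \<in> borel_measurable (vimage_algebra \<Omega> s N)"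
  shows "\<exists>\<phi>\<in>borel_measurable N. \<forall>\<omega>\<in>\<Omega>. u \<omega> = \<phi> (s \<omega>)"
  using assms(2)
proof (induction rule: borel_measurable_induct)
  case (cong f g)
  then obtain \<phi> where "\<phi> \<in> borel_measurable N" "\<forall>\<omega>\<in>\<Omega>. g \<omega> = \<phi> (s \<omega>)" by blast
  with cong(3) show ?case by (intro bexI[of _ \<phi>]) auto
next
  case (set A)
  then obtain B where "B \<in> sets N" "A = s -` B \<inter> \<Omega>"
    using sets_vimage_algebra2[OF s] by auto
  then show ?case
    by (intro bexI[of _ "indicator B"]) (auto simp: indicator_def)
next
  case (mult u c)
  then obtain \<phi> where "\<phi> \<in> borel_measurable N" "\<forall>\<omega>\<in>\<Omega>. u \<omega> = \<phi> (s \<omega>)" by blast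
  then show ?case by (intro bexI[of _ "\<lambda>y. c * \<phi> y"]) auto
next
  case (add u v)
  then obtain \<phi> \<psi> where "\<phi> \<in> borel_measurable N" "\<forall>\<omega>\<in>\<Omega>. u \<omega> = \<phi> (s \<omega>)"
    and "\<psi> \<in> borel_measurable N" "\<forall>\<omega>\<in>\<Omega>. v \<omega> = \<psi> (s \<omega>)" by blast
  then show ?case by (intro bexI[of _ "\<lambda>y. \<psi> y + \<phi> y"]) auto
next
  case (seq U)
  then obtain \<phi> where "\<And>i. \<phi> i \<in> borel_measurable N" "\<And>i. \<forall>\<omega>\<in>\<Omega>. U i \<omega> = \<phi> i (s \<omega>)"
    by metis
  then show ?case
    by (intro bexI[of _ "\<lambda>y. SUP i. \<phi> i y"]) (auto simp: SUP_apply image_comp)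
qed

lemma Doob_Dynkin:
  fixes s :: "'a \<Rightarrow> 'b" and f :: "'a \<Rightarrow> real"
  assumes s: "s \<in> \<Omega> \<rightarrow> space N" and f: "f \<in> borel_measurable (vimage_algebra \<Omega> s N)"
  shows "\<exists>\<phi>\<in>borel_measurable N. \<forall>\<omega>\<in>\<Omega>. f \<omega> = \<phi> (s \<omega>)"
proof -
  obtain \<phi>\<^sub>1 \<phi>\<^sub>2 where [measurable]: "\<phi>\<^sub>1 \<in> borel_measurable N" "\<phi>\<^sub>2 \<in> borel_measurable N"
    and pos: "\<forall>\<omega>\<in>\<Omega>. ennreal (f \<omega>) = \<phi>\<^sub>1 (s \<omega>)"
    and neg: "\<forall>\<omega>\<in>\<Omega>. ennreal (- f \<omega>) = \<phi>\<^sub>2 (s \<omega>)"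
    using Doob_Dynkin_ennreal[OF s, of "\<lambda>x. ennreal (f x)"]
      Doob_Dynkin_ennreal[OF s, of "\<lambda>x. ennreal (- f x)"] f by auto
  have "f \<omega> = enn2real (\<phi>\<^sub>1 (s \<omega>)) - enn2real (\<phi>\<^sub>2 (s \<omega>))" if "\<omega> \<in> \<Omega>" for \<omega>
    using pos[rule_format, OF that, symmetric] neg[rule_format, OF that, symmetric]
    by (cases "0 \<le> f \<omega>") (auto simp: ennreal_neg)
  then show ?thesis by (intro bexI[of _ "\<lambda>y. enn2real (\<phi>\<^sub>1 y) - enn2real (\<phi>\<^sub>2 y)"]) auto
qed

section \<open>Residuals of an array of observations\<close>

lemma borel_measurable_vec_lambda:
  fixes f :: "'a \<Rightarrow> 'n::finite \<Rightarrow> real"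
  assumes "\<And>i. (\<lambda>x. f x i) \<in> borel_measurable M"
  shows "(\<lambda>x. (\<chi> i. f x i) :: real ^ 'n) \<in> borel_measurable M"
proof (subst borel_measurable_euclidean_space, intro ballI)
  fix b :: "real ^ 'n" assume "b \<in> Basis"
  then obtain j where "b = axis j 1" by (auto simp: Basis_vec_def)
  then show "(\<lambda>x. (\<chi> i. f x i) \<bullet> b) \<in> borel_measurable M"
    by (simp add: inner_axis assms)
qed

text \<open>The statistics evaluated on an array \<open>z\<close> of observations; those of the random
  array \<open>X\<close> are obtained at \<open>z = (\<lambda>(k, i). X k i \<omega>)\<close>.\<close>

abbreviation array_entry :: "nat \<Rightarrow> 'n \<Rightarrow> (nat \<times> 'n \<Rightarrow> real) \<Rightarrow> real" where
  "array_entry k i z \<equiv> z (k, i)"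

lemma row_mean_eq_array:
  assumes "{k} \<times> UNIV \<subseteq> A"
  shows "row_mean X k \<omega> = row_mean array_entry k (\<lambda>p\<in>A. X (fst p) (snd p) \<omega>)"
  using assms by (auto simp: row_mean_def intro!: sum.cong arg_cong[where f = "\<lambda>x. x / _"])

lemma resid_eq_array:
  assumes "{k} \<times> UNIV \<subseteq> A"
  shows "resid X k \<omega> = resid array_entry k (\<lambda>p\<in>A. X (fst p) (snd p) \<omega>)"
  using assms row_mean_eq_array[OF assms] by (auto simp: resid_def vec_eq_iff)

lemma resid_sum_eq_array:
  assumes "{..<m} \<times> UNIV \<subseteq> A"
  shows "resid_sum X m \<omega> = resid_sum array_entry m (\<lambda>p\<in>A. X (fst p) (snd p) \<omega>)"
  using assms unfolding resid_sum_def by (intro sum.cong resid_eq_array) auto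

lemma borel_measurable_row_mean_array:
  assumes "{k} \<times> UNIV \<subseteq> A"
  shows "row_mean array_entry k \<in> borel_measurable (PiM A (\<lambda>_. borel))"
  unfolding row_mean_def using assms
  by (intro borel_measurable_divide borel_measurable_sum measurable_component_singleton) auto

lemma borel_measurable_resid_array:
  assumes "{k} \<times> UNIV \<subseteq> A"
  shows "resid array_entry k \<in> borel_measurable (PiM A (\<lambda>_. borel))"
  unfolding resid_def using assms
  by (intro borel_measurable_vec_lambda borel_measurable_diff borel_measurable_row_mean_array
      measurable_component_singleton) auto

lemma borel_measurable_resid_sum_array:
  assumes "{..<m} \<times> UNIV \<subseteq> A"
  shows "resid_sum array_entry m \<in> borel_measurable (PiM A (\<lambda>_. borel))"
  unfolding resid_sum_def using assms
  by (intro borel_measurable_sum borel_measurable_resid_array) auto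

section \<open>Independent identically distributed rows\<close>

lemma (in prob_space) indep_var_restrict_compose:
  assumes "indep_vars (\<lambda>_. N) Y I" "A \<inter> B = {}" "A \<subseteq> I" "B \<subseteq> I"
    and "f \<in> measurable (PiM A (\<lambda>_. N)) N\<^sub>1" "g \<in> measurable (PiM B (\<lambda>_. N)) N\<^sub>2"
  shows "indep_var N\<^sub>1 (\<lambda>\<omega>. f (\<lambda>i\<in>A. Y i \<omega>)) N\<^sub>2 (\<lambda>\<omega>. g (\<lambda>i\<in>B. Y i \<omega>))"
  using indep_var_compose[OF indep_var_restrict[OF assms(1-4)] assms(5,6)] by (simp add: comp_def)

context
  fixes M :: "'a measure" and H :: "real measure" and X :: "nat \<Rightarrow> 'n::finite \<Rightarrow> 'a \<Rightarrow> real"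
  assumes prob_M: "prob_space M" and prob_H: "prob_space H" and square_H: "integrable H (\<lambda>x. x\<^sup>2)"
    and indep_X: "prob_space.indep_vars M (\<lambda>_. borel) (\<lambda>p. X (fst p) (snd p)) UNIV"
    and distr_X: "\<And>k i. distr M borel (X k i) = H"
begin

interpretation prob_space M by (rule prob_M)

lemma borel_measurable_X [measurable]: "X k i \<in> borel_measurable M"
  using indep_X unfolding indep_vars_def by (auto dest: bspec[of _ _ "(k, i)"])

lemma sets_H [measurable_cong]: "sets H = sets borel"
  using distr_X[of 0 undefined] by (metis sets_distr)

lemma borel_measurable_row_mean [measurable]: "row_mean X k \<in> borel_measurable M"
  unfolding row_mean_def by measurable

lemma borel_measurable_resid [measurable]: "resid X k \<in> borel_measurable M"
  unfolding resid_def by (intro borel_measurable_vec_lambda) measurable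

lemma borel_measurable_resid_sum [measurable]: "resid_sum X m \<in> borel_measurable M"
  unfolding resid_sum_def by measurable

lemma integrable_square_X: "integrable M (\<lambda>\<omega>. (X k i \<omega>)\<^sup>2)"
proof -
  have "integrable (distr M borel (X k i)) (\<lambda>x. x\<^sup>2)" using square_H distr_X[of k i] by simp
  then show ?thesis by (subst (asm) integrable_distr_eq) auto
qed

lemma integrable_square_row_mean: "integrable M (\<lambda>\<omega>. (row_mean X k \<omega>)\<^sup>2)"
proof -
  have "\<And>\<omega>. (row_mean X k \<omega>)\<^sup>2 = (\<Sum>i\<in>UNIV. \<Sum>j\<in>UNIV. X k i \<omega> * X k j \<omega>) / (real CARD('n))\<^sup>2"
    unfolding row_mean_def by (simp add: power_divide power2_eq_square sum_product)
  moreover have "integrable M (\<lambda>\<omega>. X k i \<omega> * X k j \<omega>)" for i j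
    by (intro integrable_mult_of_square_integrable integrable_square_X) simp_all
  ultimately show ?thesis by simp
qed

lemma integrable_row_mean: "integrable M (row_mean X k)"
  by (rule square_integrable_imp_integrable[OF _ integrable_square_row_mean]) simp

lemma indep_resid_sum_resid: "indep_var borel (resid_sum X k) borel (resid X k)"
proof -
  let ?A = "{..<k} \<times> (UNIV :: 'n set)" and ?B = "{k} \<times> (UNIV :: 'n set)"
  have "indep_var borel (\<lambda>\<omega>. resid_sum array_entry k (\<lambda>p\<in>?A. X (fst p) (snd p) \<omega>))
      borel (\<lambda>\<omega>. resid array_entry k (\<lambda>p\<in>?B. X (fst p) (snd p) \<omega>))"
    by (intro indep_var_restrict_compose[OF indep_X] borel_measurable_resid_sum_array
        borel_measurable_resid_array) auto
  then show ?thesis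
    by (simp only: resid_sum_eq_array[of k ?A, symmetric] resid_eq_array[of k ?B, symmetric]
        order_refl)
qed

text \<open>Both sides take values in the same space, as \<open>indep_var\<close> requires; the first
  component of the right one is a dummy.\<close>

lemma indep_row_mean_resid_sum_resid:
  assumes "0 < m"
  shows "indep_var (borel \<Otimes>\<^sub>M borel) (\<lambda>\<omega>. (row_mean X 0 \<omega>, resid_sum X m \<omega>))
    (borel \<Otimes>\<^sub>M borel) (\<lambda>\<omega>. (0 :: real, resid X m \<omega>))"
proof -
  let ?A = "{..<m} \<times> (UNIV :: 'n set)" and ?B = "{m} \<times> (UNIV :: 'n set)"
  have sub: "{0} \<times> UNIV \<subseteq> ?A" using assms by auto
  have "indep_var (borel \<Otimes>\<^sub>M borel)
      (\<lambda>\<omega>. (\<lambda>z. (row_mean array_entry 0 z, resid_sum array_entry m z)) (\<lambda>p\<in>?A. X (fst p) (snd p) \<omega>))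
      (borel \<Otimes>\<^sub>M borel) (\<lambda>\<omega>. (0 :: real, resid array_entry m (\<lambda>p\<in>?B. X (fst p) (snd p) \<omega>)))"
    using sub
    by (intro indep_var_restrict_compose[OF indep_X] measurable_Pair borel_measurable_row_mean_array
        borel_measurable_resid_sum_array borel_measurable_resid_array measurable_const) auto
  then show ?thesis
    by (simp only: row_mean_eq_array[OF sub, symmetric] resid_sum_eq_array[of m ?A, symmetric]
        resid_eq_array[of m ?B, symmetric] order_refl)
qed

lemma distr_resid_eq_centred_sample:
  "distr M borel (resid X k) =
     distr (PiM UNIV (\<lambda>_. H)) borel (\<lambda>w. (\<chi> i. w i - (\<Sum>j\<in>UNIV. w j) / real CARD('n)) :: real ^ 'n)"
proof -
  let ?P = "PiM (UNIV :: (nat \<times> 'n) set) (\<lambda>_. H)" and ?P\<^sub>1 = "PiM (UNIV :: 'n set) (\<lambda>_. H)"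
  let ?array = "\<lambda>\<omega>. \<lambda>p\<in>UNIV. X (fst p) (snd p) \<omega>"
  let ?centre = "\<lambda>w. (\<chi> i. w i - (\<Sum>j\<in>UNIV. w j) / real CARD('n)) :: real ^ 'n"
  let ?row = "\<lambda>w. \<lambda>i\<in>(UNIV::'n set). w (k, i)"
  have [measurable]: "?centre \<in> borel_measurable ?P\<^sub>1"
    by (intro borel_measurable_vec_lambda) measurable
  have [measurable]: "?row \<in> measurable ?P ?P\<^sub>1" "?array \<in> measurable M ?P" by measurable
  have "distr M (PiM UNIV (\<lambda>_. borel)) ?array = PiM UNIV (\<lambda>p. distr M borel (X (fst p) (snd p)))"
    using indep_X by (subst (asm) indep_vars_iff_distr_eq_PiM) auto
  moreover have "distr M ?P ?array = distr M (PiM UNIV (\<lambda>_. borel)) ?array"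
    by (rule distr_cong) (auto intro!: sets_PiM_cong simp: sets_H)
  ultimately have array: "distr M ?P ?array = ?P" by (simp add: distr_X)
  have "distr M borel (resid X k) = distr M borel (?centre \<circ> ?row \<circ> ?array)"
    by (rule distr_cong) (auto simp: resid_def row_mean_def)
  also have "\<dots> = distr (distr M ?P ?array) borel (?centre \<circ> ?row)"
    by (rule distr_distr[symmetric]) measurable
  also have "\<dots> = distr (distr ?P ?P\<^sub>1 ?row) borel ?centre"
    unfolding array by (rule distr_distr[symmetric]) measurable
  also have "distr ?P ?P\<^sub>1 ?row = ?P\<^sub>1"
    using distr_PiM_reindex[of UNIV "\<lambda>_. H" "Pair k" UNIV] prob_H by (simp add: inj_on_def)
  finally show ?thesis .
qed

abbreviation resid_law :: "(real ^ 'n) measure" where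
  "resid_law \<equiv> distr M borel (resid X 0)"

lemma distr_resid: "distr M borel (resid X k) = resid_law"
  unfolding distr_resid_eq_centred_sample ..

lemma prob_space_resid_law: "prob_space resid_law"
  by (rule prob_space_distr) simp

lemma distr_resid_sum: "distr M borel (resid_sum X k) = conv_power resid_law k"
proof (induction k)
  case 0
  have "resid_sum X 0 = (\<lambda>_. 0)" unfolding resid_sum_def by (rule ext) simp
  then show ?case by simp
next
  case (Suc k)
  have "resid_sum X (Suc k) = (\<lambda>\<omega>. resid_sum X k \<omega> + resid X k \<omega>)"
    unfolding resid_sum_def by (rule ext) simp
  then show ?case
    using sum_indep_random_variable[OF indep_resid_sum_resid] Suc distr_resid[of k]
    by (simp add: conv_power.simps)
qed

lemma sigma_finite_subalgebra_resid_sigma: "sigma_finite_subalgebra M (resid_sigma M X j)"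
proof (rule finite_measure_subalgebra_is_sigma_finite)
  have "subalgebra M (resid_sigma M X j)"
    unfolding subalgebra_def resid_sigma_def
    using sets_image_in_sets[of M "space M" "resid_sum X j" borel] by auto
  then show "finite_measure_subalgebra M (resid_sigma M X j)"
    unfolding finite_measure_subalgebra_def finite_measure_subalgebra_axioms_def
    using finite_measure_axioms by auto
qed

lemma borel_measurable_shift_mean_resid_law [measurable]:
  assumes [measurable]: "\<phi> \<in> borel_measurable borel"
  shows "shift_mean resid_law \<phi> \<in> borel_measurable borel"
  by (rule borel_measurable_shift_mean[OF prob_space_resid_law]) simp_all

text \<open>The pair (mean of row \<open>0\<close>, first \<open>m\<close> residuals) is independent of the next
  residual, which can therefore be integrated out first.\<close>

lemma integral_row_mean_mult_shift:
  assumes "0 < m" and [measurable]: "\<phi> \<in> borel_measurable borel"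
    and int: "integrable M (\<lambda>\<omega>. row_mean X 0 \<omega> * \<phi> (resid_sum X (Suc m) \<omega>))"
  shows "(\<integral>\<omega>. row_mean X 0 \<omega> * \<phi> (resid_sum X (Suc m) \<omega>) \<partial>M)
    = (\<integral>\<omega>. row_mean X 0 \<omega> * shift_mean resid_law \<phi> (resid_sum X m \<omega>) \<partial>M)"
proof -
  let ?T = "\<lambda>\<omega>. (row_mean X 0 \<omega>, resid_sum X m \<omega>)" and ?R = "\<lambda>\<omega>. (0::real, resid X m \<omega>)"
  let ?B = "borel \<Otimes>\<^sub>M borel :: (real \<times> (real ^ 'n)) measure"
  let ?J\<^sub>T = "distr M ?B ?T" and ?J\<^sub>R = "distr M ?B ?R"
  let ?f = "\<lambda>z. fst (fst z) * \<phi> (snd (fst z) + snd (snd z))"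
  interpret J\<^sub>T: prob_space ?J\<^sub>T by (rule prob_space_distr) measurable
  interpret J\<^sub>R: prob_space ?J\<^sub>R by (rule prob_space_distr) measurable
  interpret P: pair_prob_space ?J\<^sub>T ?J\<^sub>R ..
  have joint: "distr M (?B \<Otimes>\<^sub>M ?B) (\<lambda>\<omega>. (?T \<omega>, ?R \<omega>)) = ?J\<^sub>T \<Otimes>\<^sub>M ?J\<^sub>R"
    using indep_row_mean_resid_sum_resid[OF assms(1)] by (simp add: indep_var_distribution_eq)
  have f: "?f \<in> borel_measurable (?B \<Otimes>\<^sub>M ?B)" by measurable
  have S: "\<And>\<omega>. resid_sum X (Suc m) \<omega> = resid_sum X m \<omega> + resid X m \<omega>"
    unfolding resid_sum_def by simp
  have "integrable (distr M (?B \<Otimes>\<^sub>M ?B) (\<lambda>\<omega>. (?T \<omega>, ?R \<omega>))) ?f"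
    using int f by (subst integrable_distr_eq) (auto simp: S)
  then have f_int: "integrable (?J\<^sub>T \<Otimes>\<^sub>M ?J\<^sub>R) ?f" unfolding joint .
  have inner: "(\<integral>r. ?f (t, r) \<partial>?J\<^sub>R) = fst t * shift_mean resid_law \<phi> (snd t)" for t
  proof -
    have "(\<integral>r. \<phi> (snd t + snd r) \<partial>?J\<^sub>R) = (\<integral>a. \<phi> (snd t + a) \<partial>distr M borel (resid X m))"
      by (simp add: integral_distr)
    then show ?thesis using distr_resid[of m] by (simp add: shift_mean_def)
  qed
  have "(\<integral>\<omega>. row_mean X 0 \<omega> * \<phi> (resid_sum X (Suc m) \<omega>) \<partial>M)
      = integral\<^sup>L (distr M (?B \<Otimes>\<^sub>M ?B) (\<lambda>\<omega>. (?T \<omega>, ?R \<omega>))) ?f"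
    using f by (subst integral_distr) (auto simp: S)
  also have "\<dots> = (\<integral>t. (\<integral>r. ?f (t, r) \<partial>?J\<^sub>R) \<partial>?J\<^sub>T)"
    unfolding joint by (rule P.integral_fst'[OF f_int, symmetric])
  also have "\<dots> = (\<integral>\<omega>. row_mean X 0 \<omega> * shift_mean resid_law \<phi> (resid_sum X m \<omega>) \<partial>M)"
    unfolding inner by (subst integral_distr) auto
  finally show ?thesis .
qed

abbreviation cond_mean :: "nat \<Rightarrow> 'a \<Rightarrow> real" where
  "cond_mean j \<equiv> real_cond_exp M (resid_sigma M X j) (row_mean X 0)"

lemma integrable_square_cond_mean: "integrable M (\<lambda>\<omega>. (cond_mean j \<omega>)\<^sup>2)"
proof -
  interpret sigma_finite_subalgebra M "resid_sigma M X j"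
    by (rule sigma_finite_subalgebra_resid_sigma)
  show ?thesis
    by (rule integrable_convex_cond_exp[of _ UNIV 0 0 "\<lambda>x. x\<^sup>2"])
       (use integrable_row_mean integrable_square_row_mean convex_power2 in auto)
qed

lemma expectation_cond_mean: "expectation (cond_mean j) = expectation (row_mean X 0)"
proof -
  interpret sigma_finite_subalgebra M "resid_sigma M X j"
    by (rule sigma_finite_subalgebra_resid_sigma)
  show ?thesis by (rule real_cond_exp_int(2)[OF integrable_row_mean])
qed

lemma integral_mult_cond_mean:
  assumes "f \<in> borel_measurable (resid_sigma M X j)"
    and "integrable M (\<lambda>\<omega>. f \<omega> * row_mean X 0 \<omega>)"
  shows "(\<integral>\<omega>. f \<omega> * cond_mean j \<omega> \<partial>M) = (\<integral>\<omega>. f \<omega> * row_mean X 0 \<omega> \<partial>M)"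
proof -
  interpret sigma_finite_subalgebra M "resid_sigma M X j"
    by (rule sigma_finite_subalgebra_resid_sigma)
  show ?thesis by (rule real_cond_exp_intg(2)[OF assms(2,1)]) simp
qed

lemma cond_mean_factorization:
  obtains \<phi> where "\<phi> \<in> borel_measurable borel"
    and "\<And>\<omega>. \<omega> \<in> space M \<Longrightarrow> cond_mean j \<omega> = \<phi> (resid_sum X j \<omega>)"
proof -
  have "cond_mean j \<in> borel_measurable (vimage_algebra (space M) (resid_sum X j) borel)"
    using borel_measurable_cond_exp[of M "resid_sigma M X j"] unfolding resid_sigma_def .
  then have "\<exists>\<phi>\<in>borel_measurable borel. \<forall>\<omega>\<in>space M. cond_mean j \<omega> = \<phi> (resid_sum X j \<omega>)"
    by (intro Doob_Dynkin) simp_all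
  with that show ?thesis by blast
qed

text \<open>Here \<open>\<phi>\<close> represents \<open>E(xbar | S\<^sub>m\<^sub>+\<^sub>1)\<close> as a function of \<open>S\<^sub>m\<^sub>+\<^sub>1\<close>, and
  \<open>smoothed_factor\<close>, i.e. \<open>(A\<phi>)(S\<^sub>m)\<close>, is \<open>E(\<phi>(S\<^sub>m\<^sub>+\<^sub>1) | S\<^sub>m)\<close>.\<close>

context
  fixes \<phi> :: "real ^ 'n \<Rightarrow> real" and m :: nat
  assumes borel_\<phi> [measurable]: "\<phi> \<in> borel_measurable borel"
    and cond_mean_eq: "\<And>\<omega>. \<omega> \<in> space M \<Longrightarrow> cond_mean (Suc m) \<omega> = \<phi> (resid_sum X (Suc m) \<omega>)"
begin

abbreviation smoothed_factor :: "'a \<Rightarrow> real" where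
  "smoothed_factor \<omega> \<equiv> shift_mean resid_law \<phi> (resid_sum X m \<omega>)"

lemma integrable_square_factor: "integrable (conv_power resid_law (Suc m)) (\<lambda>x. (\<phi> x)\<^sup>2)"
proof -
  have "integrable M (\<lambda>\<omega>. (\<phi> (resid_sum X (Suc m) \<omega>))\<^sup>2)"
    using integrable_square_cond_mean[of "Suc m"]
    by (rule Bochner_Integration.integrable_cong[THEN iffD1, OF refl, rotated]) (simp add: cond_mean_eq)
  then show ?thesis by (simp add: distr_resid_sum[symmetric] integrable_distr_eq)
qed

lemma integrable_square_smoothed_factor: "integrable M (\<lambda>\<omega>. (smoothed_factor \<omega>)\<^sup>2)"
  using integrable_square_shift_mean[OF prob_space_resid_law _ _ integrable_square_factor]
  by (simp add: distr_resid_sum[symmetric] integrable_distr_eq)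

lemma expectation_smoothed_factor: "expectation smoothed_factor = expectation (row_mean X 0)"
proof -
  have "expectation smoothed_factor = (\<integral>x. \<phi> x \<partial>conv_power resid_law (Suc m))"
    using integral_shift_mean[OF prob_space_resid_law _ _
        integrable_conv_power_of_square[OF _ _ _ integrable_square_factor]]
    by (simp add: distr_resid_sum[symmetric] integral_distr prob_space_resid_law)
  also have "\<dots> = expectation (cond_mean (Suc m))"
    by (simp add: distr_resid_sum[symmetric] integral_distr cond_mean_eq
        cong: Bochner_Integration.integral_cong)
  finally show ?thesis by (simp add: expectation_cond_mean)
qed

lemma variance_smoothed_factor_le:
  "real (Suc m) * variance smoothed_factor \<le> real m * variance (cond_mean (Suc m))"
proof -
  have "prob_space.variance (conv_power resid_law (Suc m)) \<phi> = variance (cond_mean (Suc m))"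
    by (simp add: distr_resid_sum[symmetric] variance_distr cond_mean_eq
        cong: Bochner_Integration.integral_cong)
  with variance_shift_mean_le[OF prob_space_resid_law _ _ integrable_square_factor]
  show ?thesis by (simp add: distr_resid_sum[symmetric] variance_distr)
qed

lemma integral_smoothed_factor_mult_cond_mean:
  assumes "0 < m"
  shows "(\<integral>\<omega>. smoothed_factor \<omega> * cond_mean m \<omega> \<partial>M) = (\<integral>\<omega>. (cond_mean (Suc m) \<omega>)\<^sup>2 \<partial>M)"
proof -
  let ?xbar = "row_mean X 0" and ?V = "cond_mean (Suc m)"
  have Y_sigma: "smoothed_factor \<in> borel_measurable (resid_sigma M X m)"
    unfolding resid_sigma_def
    by (rule measurable_compose[OF measurable_vimage_algebra1]) simp_all
  have V_xbar: "integrable M (\<lambda>\<omega>. ?V \<omega> * ?xbar \<omega>)"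
    by (intro integrable_mult_of_square_integrable integrable_square_cond_mean
        integrable_square_row_mean) simp_all
  have "(\<integral>\<omega>. smoothed_factor \<omega> * cond_mean m \<omega> \<partial>M) = (\<integral>\<omega>. smoothed_factor \<omega> * ?xbar \<omega> \<partial>M)"
    by (intro integral_mult_cond_mean Y_sigma integrable_mult_of_square_integrable
        integrable_square_smoothed_factor integrable_square_row_mean) simp_all
  also have "\<dots> = (\<integral>\<omega>. ?xbar \<omega> * \<phi> (resid_sum X (Suc m) \<omega>) \<partial>M)"
  proof (subst integral_row_mean_mult_shift[OF assms borel_\<phi>])
    show "integrable M (\<lambda>\<omega>. ?xbar \<omega> * \<phi> (resid_sum X (Suc m) \<omega>))"
      using V_xbar by (rule Bochner_Integration.integrable_cong[THEN iffD1, OF refl, rotated])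
        (simp add: cond_mean_eq)
  qed (simp add: mult.commute)
  also have "\<dots> = (\<integral>\<omega>. ?V \<omega> * ?xbar \<omega> \<partial>M)"
    by (rule Bochner_Integration.integral_cong) (simp_all add: cond_mean_eq)
  also have "\<dots> = (\<integral>\<omega>. ?V \<omega> * ?V \<omega> \<partial>M)"
    by (rule integral_mult_cond_mean[OF _ V_xbar, symmetric]) simp
  finally show ?thesis by (simp add: power2_eq_square)
qed

lemma covariance_smoothed_factor_cond_mean:
  assumes "0 < m"
  defines "\<mu> \<equiv> expectation (row_mean X 0)"
  shows "(\<integral>\<omega>. (smoothed_factor \<omega> - \<mu>) * (cond_mean m \<omega> - \<mu>) \<partial>M) = variance (cond_mean (Suc m))"
proof -
  have "integrable M smoothed_factor"
    by (rule square_integrable_imp_integrable[OF _ integrable_square_smoothed_factor]) simp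
  moreover have "integrable M (cond_mean m)"
    by (rule square_integrable_imp_integrable[OF _ integrable_square_cond_mean]) simp
  moreover have "integrable M (\<lambda>\<omega>. smoothed_factor \<omega> * cond_mean m \<omega>)"
    by (intro integrable_mult_of_square_integrable integrable_square_smoothed_factor
        integrable_square_cond_mean) simp_all
  ultimately have "(\<integral>\<omega>. (smoothed_factor \<omega> - \<mu>) * (cond_mean m \<omega> - \<mu>) \<partial>M)
      = (\<integral>\<omega>. smoothed_factor \<omega> * cond_mean m \<omega> \<partial>M) - \<mu> * \<mu>"
    using integral_mult_centred[of smoothed_factor "cond_mean m"]
    by (simp only: \<mu>_def expectation_smoothed_factor expectation_cond_mean)
  also have "\<dots> = (\<integral>\<omega>. (cond_mean (Suc m) \<omega>)\<^sup>2 \<partial>M) - (expectation (cond_mean (Suc m)))\<^sup>2"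
    by (simp only: integral_smoothed_factor_mult_cond_mean[OF assms(1)] \<mu>_def
        expectation_cond_mean power2_eq_square)
  also have "\<dots> = variance (cond_mean (Suc m))"
    by (rule variance_eq[symmetric, OF square_integrable_imp_integrable integrable_square_cond_mean])
       (simp_all add: integrable_square_cond_mean)
  finally show ?thesis .
qed

end

lemma variance_cond_mean_Suc_le:
  assumes "0 < m"
  shows "real (Suc m) * variance (cond_mean (Suc m)) \<le> real m * variance (cond_mean m)"
proof -
  let ?\<mu> = "expectation (row_mean X 0)"
  obtain \<phi> where \<phi>_borel [measurable]: "\<phi> \<in> borel_measurable borel"
    and \<phi>: "\<And>\<omega>. \<omega> \<in> space M \<Longrightarrow> cond_mean (Suc m) \<omega> = \<phi> (resid_sum X (Suc m) \<omega>)"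
    using cond_mean_factorization[of "Suc m"] by blast
  let ?Y = "\<lambda>\<omega>. shift_mean resid_law \<phi> (resid_sum X m \<omega>)"
  have "(\<integral>\<omega>. (?Y \<omega> - ?\<mu>) * (cond_mean m \<omega> - ?\<mu>) \<partial>M)\<^sup>2
      \<le> (\<integral>\<omega>. (?Y \<omega> - ?\<mu>)\<^sup>2 \<partial>M) * (\<integral>\<omega>. (cond_mean m \<omega> - ?\<mu>)\<^sup>2 \<partial>M)"
    by (rule Cauchy_Schwarz_integral) (simp_all add: integrable_square_diff
        integrable_square_smoothed_factor[OF \<phi>_borel \<phi>] integrable_square_cond_mean)
  then have "(variance (cond_mean (Suc m)))\<^sup>2 \<le> variance ?Y * variance (cond_mean m)"
    by (simp only: covariance_smoothed_factor_cond_mean[OF \<phi>_borel \<phi> assms]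
        expectation_smoothed_factor[OF \<phi>_borel \<phi>] expectation_cond_mean)
  then show ?thesis
    by (rule mult_le_mult_of_square_le_mult[OF _ variance_smoothed_factor_le[OF \<phi>_borel \<phi>]])
       (simp_all add: variance_positive)
qed

end

theorem corollary2:
  fixes M :: "'a measure" and H :: "real measure"
    and X :: "nat \<Rightarrow> 'n::finite \<Rightarrow> 'a \<Rightarrow> real" and N :: nat
  assumes "prob_space M"
    and "prob_space H"
    and "integrable H (\<lambda>x. x\<^sup>2)"
    and "prob_space.indep_vars M (\<lambda>_. borel) (\<lambda>p. X (fst p) (snd p)) UNIV"
    and "\<And>k i. distr M borel (X k i) = H"
    and "N > 1"
  shows "real (N - 1) * prob_space.variance M (real_cond_exp M (resid_sigma M X (N - 1)) (row_mean X 0))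
         \<ge> real N * prob_space.variance M (real_cond_exp M (resid_sigma M X N) (row_mean X 0))"
proof -
  obtain m where "N = Suc m" "0 < m" using \<open>N > 1\<close> by (cases N) auto
  then show ?thesis using variance_cond_mean_Suc_le[OF assms(1-5) \<open>0 < m\<close>] by simp
qed

end
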